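(* In the setting below, let $N=\lim_{t\to\infty}(S+tP)^{-1}$. If $r=0$ then $\|N\|_\infty=0$. If $r\ge1$, let $d=\sum_{i=1}^r|p_i-q_i|$; then $$\|N\|_\infty=\frac1\alpha+\frac{\ell}{\alpha(\alpha+\ell\gamma)}\max_{1\le i\le r}\frac{|p_i-q_i|\,(d-2|p_i-q_i|)}{p_i+q_i}.$$
   Context: Let $n\ge3$, $\ell>0$, $\alpha\ge(n-2)\ell$, $S=\alpha I_n+\ell\mathbf{1}_n\mathbf{1}_n^\top$. For a real matrix $P$, $\Delta_i(P)=|P_{ii}|-\sum_{j\ne i}|P_{ij}|$. A signless Laplacian is a real symmetric $n\times n$ matrix $P$ with $P_{ij}\in\{0,1\}$ for $i\ne j$, $P_{ii}\ge0$, and $\Delta_i(P)\in\{0,2\}$ for all $i$; its graph $G$ has vertex set $\{1,\dots,n\}$, an edge $\{i,j\}$ ($i\ne j$) whenever $P_{ij}=1$, and a self-loop $\{i,i\}$ whenever $\Delta_i(P)=2$ (graphs with self-loops are not bipartite). $r$ is the number of bipartite connected components $G_1,\dots,G_r$ of $G$, where $G_i$ has bipartition classes of sizes $p_i,q_i$; $\gamma=\sum_{i=1}^r\frac{(p_i-q_i)^2}{p_i+q_i}$. $\|A\|_\infty$ is the maximum absolute row sum. *)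

theory Defs
  imports "HOL-Analysis.Analysis"
begin

definition Delta :: "real^'n^'n \<Rightarrow> 'n \<Rightarrow> real" where
  "Delta P i = \<bar>P$i$i\<bar> - (\<Sum>j\<in>UNIV - {i}. \<bar>P$i$j\<bar>)"

definition signless_laplacian :: "real^'n^'n \<Rightarrow> bool" where
  "signless_laplacian P \<longleftrightarrow> transpose P = P
     \<and> (\<forall>i j. i \<noteq> j \<longrightarrow> P$i$j \<in> {0, 1})
     \<and> (\<forall>i. P$i$i \<ge> 0)
     \<and> (\<forall>i. Delta P i \<in> {0, 2})"

definition edge :: "real^'n^'n \<Rightarrow> 'n \<Rightarrow> 'n \<Rightarrow> bool" where
  "edge P i j \<longleftrightarrow> (i \<noteq> j \<and> P$i$j = 1) \<or> (i = j \<and> Delta P i = 2)"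

definition components :: "real^'n^'n \<Rightarrow> 'n set set" where
  "components P = {{j. (edge P)\<^sup>*\<^sup>* i j} | i. True}"

text \<open>X is one bipartition class of C (the other being C - X).\<close>
definition bipartition :: "real^'n^'n \<Rightarrow> 'n set \<Rightarrow> 'n set \<Rightarrow> bool" where
  "bipartition P C X \<longleftrightarrow> X \<subseteq> C \<and>
     (\<forall>i\<in>C. \<forall>j\<in>C. edge P i j \<longrightarrow> (i \<in> X \<longleftrightarrow> j \<notin> X))"

definition bipartite_components :: "real^'n^'n \<Rightarrow> 'n set set" where
  "bipartite_components P = {C \<in> components P. \<exists>X. bipartition P C X}"

text \<open>|p - q| for a bipartite component (well defined since the component is connected).\<close>
definition imbalance :: "real^'n^'n \<Rightarrow> 'n set \<Rightarrow> real" where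
  "imbalance P C = (let X = (SOME X. bipartition P C X) in
     \<bar>real (card X) - real (card (C - X))\<bar>)"

definition gamma :: "real^'n^'n \<Rightarrow> real" where
  "gamma P = (\<Sum>C\<in>bipartite_components P. (imbalance P C)^2 / real (card C))"

definition norm_inf :: "real^'n^'n \<Rightarrow> real" where
  "norm_inf A = Max (range (\<lambda>i. \<Sum>j\<in>UNIV. \<bar>A$i$j\<bar>))"

end

theory Submission
  imports Defs
begin

text \<open>
  (1) A general fact about pencils S + t P with S symmetric positive definite and P
  symmetric positive semidefinite: if a symmetric matrix N satisfies P N = 0 and
  N S x = x for every x in ker P, then (S + t P)^-1 tends to N as t tends to infinity.
  The error (S + t P)^-1 u - N u is mapped by S + t P into the range of P, and the
  energy estimate for such vectors gives a bound of order t^(-1/2).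

  (2) The kernel of a signless Laplacian: x is in ker P iff x changes sign along every
  edge (and vanishes at self-loops). Hence ker P has the orthogonal basis of signed
  indicator vectors v_C of the bipartite components C.

  (3) With z the projection of the all-ones vector onto ker P (so that z . z = gamma),
  Sherman-Morrison suggests N = (1/alpha) (sum_C v_C v_C^T / |C| - beta z z^T),
  beta = l / (alpha + l gamma). We check the hypotheses of (1) for this N and compute its
  absolute row sums blockwise, which yields the stated infinity norm.
\<close>

lemma symmetric_matrix_inner_swap:
  fixes A :: "real^'n^'n"
  assumes "transpose A = A"
  shows "u \<bullet> (A *v v) = v \<bullet> (A *v u)"
  by (metis assms dot_lmul_matrix inner_commute transpose_matrix_vector)

lemma symmetric_matrix_range:
  fixes A :: "real^'n^'n"
  assumes sym: "transpose A = A" and orth: "\<And>x. A *v x = 0 \<Longrightarrow> x \<bullet> y = 0"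
  shows "\<exists>w. A *v w = y"
proof -
  let ?f = "(*v) A"
  have lin: "linear ?f" by (rule matrix_vector_mul_linear)
  have "?f -` {0} = (range (adjoint ?f))\<^sup>\<bottom>" by (rule ker_orthogonal_comp_adjoint[OF lin])
  also have "adjoint ?f = ?f" using adjoint_matrix sym by metis
  finally have ker: "?f -` {0} = (range ?f)\<^sup>\<bottom>" .
  have "y \<in> (?f -` {0})\<^sup>\<bottom>"
    using orth unfolding orthogonal_comp_def orthogonal_def by auto
  also have "\<dots> = range ?f" unfolding ker
    by (rule orthogonal_comp_self) (simp add: lin linear_subspace_image)
  finally show ?thesis by auto
qed

locale regularized_pencil =
  fixes S P :: "real^'n^'n" and a :: real
  assumes S_symmetric: "transpose S = S"
    and S_coercive: "\<And>x. x \<bullet> (S *v x) \<ge> a * (x \<bullet> x)"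
    and a_pos: "a > 0"
    and P_symmetric: "transpose P = P"
    and P_psd: "\<And>x. x \<bullet> (P *v x) \<ge> 0"
begin

lemma pencil_mult: "(S + t *\<^sub>R P) *v u = S *v u + t *\<^sub>R (P *v u)"
  by (simp add: matrix_vector_mult_add_rdistrib scaleR_matrix_vector_assoc)

lemma pencil_coercive:
  assumes "t \<ge> 0"
  shows "x \<bullet> ((S + t *\<^sub>R P) *v x) \<ge> a * (x \<bullet> x)"
proof -
  have "t * (x \<bullet> (P *v x)) \<ge> 0" using P_psd assms by simp
  then show ?thesis using S_coercive[of x] by (simp add: pencil_mult inner_add_right)
qed

lemma pencil_inverse:
  assumes "t \<ge> 0"
  shows "(S + t *\<^sub>R P) *v (matrix_inv (S + t *\<^sub>R P) *v u) = u"
proof -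
  let ?M = "S + t *\<^sub>R P"
  have "x = 0" if "?M *v x = 0" for x
  proof -
    have "a * (x \<bullet> x) \<le> 0" using pencil_coercive[OF assms, of x] that by simp
    then have "x \<bullet> x \<le> 0" using a_pos by (simp add: mult_le_0_iff)
    then show "x = 0" by (metis antisym inner_ge_zero inner_eq_zero_iff)
  qed
  then have "invertible ?M"
    using matrix_left_invertible_ker invertible_left_inverse by blast
  then have "?M ** matrix_inv ?M = mat 1 \<and> matrix_inv ?M ** ?M = mat 1"
    unfolding invertible_def matrix_inv_def by (rule someI_ex)
  then show ?thesis by (metis matrix_vector_mul_assoc matrix_vector_mul_lid)
qed

lemma pencil_range_bound:
  assumes t: "t > 0" and eq: "(S + t *\<^sub>R P) *v x = P *v w"
  shows "2 * a * t * (x \<bullet> x) \<le> w \<bullet> (P *v w)"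
proof -
  define q where "q = x \<bullet> (P *v x)"
  define p where "p = x \<bullet> (P *v w)"
  define c where "c = w \<bullet> (P *v w)"
  have q: "q \<ge> 0" unfolding q_def by (rule P_psd)
  have coer: "a * (x \<bullet> x) + t * q \<le> p"
    using S_coercive[of x] eq unfolding q_def p_def
    by (simp add: pencil_mult inner_add_right flip: eq)
  have "0 \<le> (t *\<^sub>R x - w) \<bullet> (P *v (t *\<^sub>R x - w))" by (rule P_psd)
  also have "\<dots> = t * t * q - 2 * t * p + c"
    using symmetric_matrix_inner_swap[OF P_symmetric, of w x] unfolding q_def p_def c_def
    by (simp add: matrix_vector_mult_diff_distrib matrix_vector_mult_scaleR
        inner_diff_left inner_diff_right algebra_simps)
  finally have "2 * t * p \<le> t * t * q + c" by simp
  moreover have "2 * t * (a * (x \<bullet> x) + t * q) \<le> 2 * t * p"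
    using coer t by simp
  moreover have "t * t * q \<ge> 0" using q t by simp
  ultimately show ?thesis unfolding c_def by (simp add: algebra_simps)
qed

lemma pencil_inverse_column_limit:
  fixes N :: "real^'n^'n"
  assumes N_symmetric: "transpose N = N"
    and P_N: "\<And>y. P *v (N *v y) = 0"
    and N_S_kernel: "\<And>x. P *v x = 0 \<Longrightarrow> N *v (S *v x) = x"
  shows "((\<lambda>t. matrix_inv (S + t *\<^sub>R P) *v u) \<longlongrightarrow> N *v u) at_top"
proof -
  define y where "y = u - S *v (N *v u)"
  have "x \<bullet> y = 0" if "P *v x = 0" for x
  proof -
    have "x \<bullet> (S *v (N *v u)) = (S *v x) \<bullet> (N *v u)"
      using symmetric_matrix_inner_swap[OF S_symmetric] by (simp add: inner_commute)
    also have "\<dots> = u \<bullet> (N *v (S *v x))"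
      using symmetric_matrix_inner_swap[OF N_symmetric] by simp
    also have "\<dots> = x \<bullet> u" using N_S_kernel[OF that] by (simp add: inner_commute)
    finally show ?thesis unfolding y_def by (simp add: inner_diff_right)
  qed
  then obtain w where w: "P *v w = y"
    using symmetric_matrix_range[OF P_symmetric] by blast
  define c where "c = w \<bullet> (P *v w) / (2 * a)"
  have bound: "norm (matrix_inv (S + t *\<^sub>R P) *v u - N *v u) \<le> sqrt (c * inverse t)"
    if t: "t > 0" for t
  proof -
    let ?M = "S + t *\<^sub>R P"
    define x where "x = matrix_inv ?M *v u - N *v u"
    have "?M *v x = u - ?M *v (N *v u)"
      unfolding x_def using pencil_inverse t by (simp add: matrix_vector_mult_diff_distrib)
    also have "\<dots> = P *v w" unfolding w y_def pencil_mult P_N by simp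
    finally have "2 * a * t * (x \<bullet> x) \<le> w \<bullet> (P *v w)"
      by (rule pencil_range_bound[OF t])
    then have "x \<bullet> x \<le> c * inverse t"
      unfolding c_def using t a_pos by (simp add: field_simps)
    then show ?thesis unfolding x_def norm_eq_sqrt_inner by (rule real_sqrt_le_mono)
  qed
  have "((\<lambda>t. sqrt (c * inverse t)) \<longlongrightarrow> 0) at_top"
    using tendsto_real_sqrt[OF tendsto_mult_right_zero[OF tendsto_inverse_0_at_top[OF filterlim_ident]]]
    by simp
  moreover have "\<forall>\<^sub>F t in at_top.
      norm (matrix_inv (S + t *\<^sub>R P) *v u - N *v u) \<le> sqrt (c * inverse t)"
    using eventually_gt_at_top[of "0::real"] by eventually_elim (rule bound)
  ultimately have "((\<lambda>t. matrix_inv (S + t *\<^sub>R P) *v u - N *v u) \<longlongrightarrow> 0) at_top"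
    by (rule Lim_null_comparison[rotated])
  then show ?thesis by (rule LIM_zero_cancel)
qed

lemma pencil_inverse_limit:
  fixes N :: "real^'n^'n"
  assumes "transpose N = N"
    and "\<And>y. P *v (N *v y) = 0"
    and "\<And>x. P *v x = 0 \<Longrightarrow> N *v (S *v x) = x"
  shows "((\<lambda>t. matrix_inv (S + t *\<^sub>R P)) \<longlongrightarrow> N) at_top"
proof (intro vec_tendstoI)
  fix i j
  have "((\<lambda>t. (matrix_inv (S + t *\<^sub>R P) *v axis j 1) $ i) \<longlongrightarrow> (N *v axis j 1) $ i) at_top"
    by (intro tendsto_vec_nth pencil_inverse_column_limit assms)
  then show "((\<lambda>t. matrix_inv (S + t *\<^sub>R P) $ i $ j) \<longlongrightarrow> N $ i $ j) at_top"
    by (simp add: matrix_vector_mult_basis column_def)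
qed

end

locale signless_laplacian_graph =
  fixes P :: "real^'n^'n"
  assumes signless: "signless_laplacian P"
begin

lemma P_symmetric: "transpose P = P"
  using signless unfolding signless_laplacian_def by simp

lemma P_entry_sym: "P$i$j = P$j$i"
  using P_symmetric unfolding transpose_def by (metis vec_lambda_beta)

lemma P_offdiag: "i \<noteq> j \<Longrightarrow> P$i$j = 0 \<or> P$i$j = 1"
  using signless unfolding signless_laplacian_def by auto

lemma P_nonneg: "P$i$j \<ge> 0"
  using signless P_offdiag unfolding signless_laplacian_def by (cases "i = j") force+

lemma Delta_cases: "Delta P i = 0 \<or> Delta P i = 2"
  using signless unfolding signless_laplacian_def by auto

lemma edge_sym: "edge P i j \<Longrightarrow> edge P j i"
  unfolding edge_def using P_entry_sym by metis

definition adj :: "'n \<Rightarrow> 'n \<Rightarrow> real" where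
  "adj i j = (if i = j then 0 else P$i$j)"

lemma adj_nonneg: "adj i j \<ge> 0"
  unfolding adj_def using P_nonneg by simp

lemma adj_sym: "adj i j = adj j i"
  unfolding adj_def using P_entry_sym by simp

lemma adj_edge: "adj i j \<noteq> 0 \<Longrightarrow> edge P i j \<and> adj i j = 1"
  unfolding adj_def edge_def using P_offdiag by (cases "i = j") auto

text \<open>Since the off-diagonal entries are nonnegative, the defect is the diagonal entry
  minus the off-diagonal row sum.\<close>
lemma Delta_adj: "Delta P i = P$i$i - (\<Sum>j\<in>UNIV. adj i j)"
proof -
  have "(\<Sum>j\<in>UNIV. adj i j) = (\<Sum>j\<in>UNIV - {i}. P$i$j)"
    unfolding adj_def by (simp add: sum.If_cases Compl_eq_Diff_UNIV)
  then show ?thesis unfolding Delta_def using P_nonneg by simp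
qed

lemma P_mult_row: "(P *v x)$i = P$i$i * x$i + (\<Sum>j\<in>UNIV. adj i j * x$j)"
proof -
  have "(P *v x)$i = (\<Sum>j\<in>UNIV. (if j = i then P$i$i * x$i else 0) + adj i j * x$j)"
    unfolding matrix_vector_mult_def adj_def by (auto intro: sum.cong)
  then show ?thesis by (simp add: sum.distrib)
qed

lemma quadratic_form:
  "x \<bullet> (P *v x) = (\<Sum>i\<in>UNIV. Delta P i * (x$i)^2)
     + (1/2) * (\<Sum>i\<in>UNIV. \<Sum>j\<in>UNIV. adj i j * (x$i + x$j)^2)"
proof -
  let ?A = "\<Sum>i\<in>UNIV. \<Sum>j\<in>UNIV. adj i j * (x$i)^2"
  let ?X = "\<Sum>i\<in>UNIV. \<Sum>j\<in>UNIV. adj i j * x$i * x$j"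
  have form: "x \<bullet> (P *v x) = (\<Sum>i\<in>UNIV. P$i$i * (x$i)^2) + ?X"
    by (simp add: inner_vec_def P_mult_row distrib_left sum.distrib sum_distrib_left
        power2_eq_square algebra_simps)
  have swap: "(\<Sum>i\<in>UNIV. \<Sum>j\<in>UNIV. adj i j * (x$j)^2) = ?A"
    by (subst sum.swap) (simp add: adj_sym)
  have squares: "(\<Sum>i\<in>UNIV. \<Sum>j\<in>UNIV. adj i j * (x$i + x$j)^2) = 2 * ?A + 2 * ?X"
  proof -
    have "(\<Sum>i\<in>UNIV. \<Sum>j\<in>UNIV. adj i j * (x$i + x$j)^2)
        = ?A + (\<Sum>i\<in>UNIV. \<Sum>j\<in>UNIV. adj i j * (x$j)^2) + 2 * ?X"
      by (simp add: power2_sum distrib_left sum.distrib sum_distrib_left algebra_simps)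
    then show ?thesis using swap by simp
  qed
  have defects: "(\<Sum>i\<in>UNIV. Delta P i * (x$i)^2) = (\<Sum>i\<in>UNIV. P$i$i * (x$i)^2) - ?A"
    by (simp add: Delta_adj left_diff_distrib sum_subtractf sum_distrib_right)
  show ?thesis unfolding form squares defects by (simp add: distrib_left)
qed

lemma Delta_nonneg: "Delta P i \<ge> 0"
  using Delta_cases[of i] by linarith

lemma P_psd: "x \<bullet> (P *v x) \<ge> 0"
  unfolding quadratic_form using Delta_nonneg adj_nonneg by (simp add: sum_nonneg)

lemma kernel_edge_flip:
  assumes x: "P *v x = 0" and e: "edge P i j"
  shows "x$j = - x$i"
proof -
  have loops: "\<forall>i\<in>UNIV. Delta P i * (x$i)^2 \<ge> 0"
    using Delta_nonneg by simp
  have edges: "\<forall>i\<in>UNIV. \<forall>j\<in>UNIV. adj i j * (x$i + x$j)^2 \<ge> 0"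
    using adj_nonneg by simp
  then have rows: "\<forall>i\<in>UNIV. (\<Sum>j\<in>UNIV. adj i j * (x$i + x$j)^2) \<ge> 0"
    by (simp add: sum_nonneg)
  have "(\<Sum>i\<in>UNIV. Delta P i * (x$i)^2) \<ge> 0"
    "(\<Sum>i\<in>UNIV. \<Sum>j\<in>UNIV. adj i j * (x$i + x$j)^2) \<ge> 0"
    using loops rows by (simp_all add: sum_nonneg)
  moreover have "(\<Sum>i\<in>UNIV. Delta P i * (x$i)^2)
      + (1/2) * (\<Sum>i\<in>UNIV. \<Sum>j\<in>UNIV. adj i j * (x$i + x$j)^2) = 0"
    using quadratic_form[of x] x by simp
  ultimately have "(\<Sum>i\<in>UNIV. Delta P i * (x$i)^2) = 0"
    and "(\<Sum>i\<in>UNIV. \<Sum>j\<in>UNIV. adj i j * (x$i + x$j)^2) = 0" by linarith+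
  then have loop0: "Delta P i * (x$i)^2 = 0" and edge0: "adj i j * (x$i + x$j)^2 = 0"
    using loops rows edges by (simp_all add: sum_nonneg_eq_0_iff)
  show ?thesis
  proof (cases "i = j")
    case True
    then have "Delta P i = 2" using e unfolding edge_def by simp
    then show ?thesis using loop0 True by simp
  next
    case False
    then have "adj i j = 1" using e unfolding edge_def adj_def by simp
    then show ?thesis using edge0 by simp
  qed
qed

lemma edge_flip_kernel:
  assumes flip: "\<And>i j. edge P i j \<Longrightarrow> x$j = - x$i"
  shows "P *v x = 0"
proof -
  have "(P *v x)$i = 0" for i
  proof -
    have "adj i j * x$j = - (adj i j * x$i)" for j
      using adj_edge[of i j] flip by (cases "adj i j = 0") auto
    then have "(P *v x)$i = Delta P i * x$i"
      unfolding P_mult_row Delta_adj by (simp add: sum_negf sum_distrib_left algebra_simps)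
    moreover have "Delta P i = 0 \<or> x$i = 0"
      using Delta_cases[of i] flip[of i i] unfolding edge_def by auto
    ultimately show ?thesis by auto
  qed
  then show ?thesis by (simp add: vec_eq_iff)
qed

definition component :: "'n \<Rightarrow> 'n set" where
  "component k = {j. (edge P)\<^sup>*\<^sup>* k j}"

lemma reachable_sym: "(edge P)\<^sup>*\<^sup>* i j \<Longrightarrow> (edge P)\<^sup>*\<^sup>* j i"
  by (induction rule: rtranclp_induct)
    (auto intro: converse_rtranclp_into_rtranclp edge_sym)

lemma components_eq: "components P = range component"
  unfolding components_def component_def by auto

lemma component_self: "k \<in> component k"
  unfolding component_def by simp

lemma component_eq: "j \<in> component k \<Longrightarrow> component j = component k"
  unfolding component_def using reachable_sym by (auto intro: rtranclp_trans)

lemma component_edge: "i \<in> component k \<Longrightarrow> edge P i j \<Longrightarrow> j \<in> component k"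
  unfolding component_def by (auto intro: rtranclp.rtrancl_into_rtrancl)

abbreviation Bip :: "'n set set" where
  "Bip \<equiv> bipartite_components P"

lemma finite_Bip: "finite Bip"
  by (rule finite_subset[of _ "Pow UNIV"]) auto

lemma Bip_component: "C \<in> Bip \<Longrightarrow> k \<in> C \<Longrightarrow> C = component k"
  unfolding bipartite_components_def components_eq using component_eq by auto

lemma Bip_disjoint: "C \<in> Bip \<Longrightarrow> D \<in> Bip \<Longrightarrow> k \<in> C \<Longrightarrow> k \<in> D \<Longrightarrow> C = D"
  using Bip_component by blast

lemma Bip_card_pos: "C \<in> Bip \<Longrightarrow> card C > 0"
  unfolding bipartite_components_def components_eq
  using component_self by (auto simp: card_gt_0_iff)

definition side :: "'n set \<Rightarrow> 'n set" where
  "side C = (SOME X. bipartition P C X)"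

lemma side_bipartition: "C \<in> Bip \<Longrightarrow> bipartition P C (side C)"
  unfolding side_def bipartite_components_def by (auto intro: someI_ex)

definition side_sign :: "'n set \<Rightarrow> 'n \<Rightarrow> real" where
  "side_sign C k = (if k \<in> side C then 1 else if k \<in> C then -1 else 0)"

definition signed_imbalance :: "'n set \<Rightarrow> real" where
  "signed_imbalance C = real (card (side C)) - real (card (C - side C))"

lemma imbalance_eq: "imbalance P C = \<bar>signed_imbalance C\<bar>"
  unfolding imbalance_def signed_imbalance_def side_def Let_def by simp

lemma gamma_eq: "gamma P = (\<Sum>C\<in>Bip. (signed_imbalance C)^2 / card C)"
  unfolding gamma_def imbalance_eq by simp

lemma side_sign_outside: "C \<in> Bip \<Longrightarrow> k \<notin> C \<Longrightarrow> side_sign C k = 0"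
  using side_bipartition unfolding side_sign_def bipartition_def by auto

lemma side_sign_abs: "k \<in> C \<Longrightarrow> \<bar>side_sign C k\<bar> = 1"
  unfolding side_sign_def by auto

lemma side_sign_square: "k \<in> C \<Longrightarrow> side_sign C k * side_sign C k = 1"
  unfolding side_sign_def by auto

lemma side_sign_edge:
  assumes C: "C \<in> Bip" and i: "i \<in> C" and e: "edge P i j"
  shows "j \<in> C \<and> side_sign C j = - side_sign C i"
proof -
  have j: "j \<in> C" using Bip_component[OF C i] component_edge e component_self by metis
  have "i \<in> side C \<longleftrightarrow> j \<notin> side C"
    using side_bipartition[OF C] i j e unfolding bipartition_def by blast
  then show ?thesis using i j unfolding side_sign_def by auto
qed

definition sign_vec :: "'n set \<Rightarrow> real^'n" where
  "sign_vec C = (\<chi> k. side_sign C k)"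

lemma sign_vec_kernel: "C \<in> Bip \<Longrightarrow> P *v sign_vec C = 0"
proof (rule edge_flip_kernel)
  fix i j assume C: "C \<in> Bip" and e: "edge P i j"
  show "sign_vec C $ j = - sign_vec C $ i"
  proof (cases "i \<in> C")
    case True
    then show ?thesis using side_sign_edge[OF C True e] unfolding sign_vec_def by simp
  next
    case False
    then have "j \<notin> C" using side_sign_edge[OF C _ edge_sym[OF e]] by blast
    then show ?thesis using False side_sign_outside[OF C] unfolding sign_vec_def by simp
  qed
qed

lemma sign_vec_inner:
  assumes C: "C \<in> Bip" and D: "D \<in> Bip"
  shows "sign_vec C \<bullet> sign_vec D = (if C = D then real (card C) else 0)"
proof -
  have "side_sign C k * side_sign D k = (if C = D then of_bool (k \<in> C) else 0)" for k
    using side_sign_square[of k C] side_sign_outside[OF C] side_sign_outside[OF D]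
      Bip_disjoint[OF C D] by (cases "k \<in> C") auto
  then show ?thesis unfolding sign_vec_def inner_vec_def by (simp add: sum.If_cases)
qed

lemma sign_vec_sum: "C \<in> Bip \<Longrightarrow> sign_vec C \<bullet> (\<chi> k. 1) = signed_imbalance C"
proof -
  assume C: "C \<in> Bip"
  have side: "side C \<subseteq> C" using side_bipartition[OF C] unfolding bipartition_def by simp
  have "side_sign C k = of_bool (k \<in> side C) - of_bool (k \<in> C - side C)" for k
    using side unfolding side_sign_def by auto
  then show ?thesis unfolding sign_vec_def inner_vec_def signed_imbalance_def
    by (simp add: sum_subtractf sum.If_cases set_diff_eq)
qed

lemma kernel_on_bipartite:
  assumes x: "P *v x = 0" and C: "C \<in> Bip" and i: "i \<in> C" and j: "j \<in> C"
  shows "x$j * side_sign C j = x$i * side_sign C i"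
proof -
  have "(edge P)\<^sup>*\<^sup>* i j" using j Bip_component[OF C i] component_def by auto
  then show ?thesis
  proof (induction rule: rtranclp_induct)
    case (step y z)
    have "y \<in> C" using step(1) Bip_component[OF C i] component_def by auto
    then show ?case
      using side_sign_edge[OF C _ step(2)] kernel_edge_flip[OF x step(2)] step(3) by simp
  qed simp
qed

text \<open>A kernel vector vanishes on every non-bipartite component: otherwise its sign
  pattern would be a bipartition.\<close>
lemma kernel_off_bipartite:
  assumes x: "P *v x = 0" and nb: "component k \<notin> Bip"
  shows "x$k = 0"
proof (rule ccontr)
  assume nz: "x$k \<noteq> 0"
  have pm: "x$j = x$k \<or> x$j = - x$k" if "j \<in> component k" for j
  proof -
    have "(edge P)\<^sup>*\<^sup>* k j" using that component_def by auto
    then show ?thesis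
      by (induction rule: rtranclp_induct) (use kernel_edge_flip[OF x] in auto)
  qed
  define X where "X = {j \<in> component k. x$j = x$k}"
  have "bipartition P (component k) X"
    unfolding bipartition_def
  proof (intro conjI ballI impI)
    fix i j assume ij: "i \<in> component k" "j \<in> component k" "edge P i j"
    then show "(i \<in> X) = (j \<notin> X)"
      using kernel_edge_flip[OF x ij(3)] pm[OF ij(1)] pm[OF ij(2)] nz unfolding X_def by auto
  qed (auto simp: X_def)
  then have "component k \<in> Bip"
    unfolding bipartite_components_def components_eq by auto
  then show False using nb by simp
qed

text \<open>A vertex lies in at most one bipartite component, so a sum weighted by the signs at
  that vertex has a single surviving term.\<close>
lemma sum_Bip_single:
  assumes C: "C \<in> Bip" and k: "k \<in> C"
  shows "(\<Sum>D\<in>Bip. f D * side_sign D k) = f C * side_sign C k"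
proof -
  have "(\<Sum>D\<in>Bip - {C}. f D * side_sign D k) = 0"
    using side_sign_outside Bip_disjoint[OF C _ k] by (intro sum.neutral) fastforce
  then show ?thesis using finite_Bip C by (simp add: sum.remove)
qed

lemma sum_Bip_none: "(\<forall>C\<in>Bip. k \<notin> C) \<Longrightarrow> (\<Sum>D\<in>Bip. f D * side_sign D k) = 0"
  using side_sign_outside by (auto intro!: sum.neutral)

lemma kernel_expansion:
  assumes x: "P *v x = 0"
  shows "x = (\<Sum>C\<in>Bip. ((sign_vec C \<bullet> x) / card C) *\<^sub>R sign_vec C)"
proof -
  have "x$k = (\<Sum>C\<in>Bip. (sign_vec C \<bullet> x) / card C * side_sign C k)" for k
  proof (cases "\<exists>C\<in>Bip. k \<in> C")
    case True
    then obtain C where C: "C \<in> Bip" "k \<in> C" by blast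
    have "side_sign C j * x$j = (if j \<in> C then side_sign C k * x$k else 0)" for j
      using kernel_on_bipartite[OF x C, of j] side_sign_outside[OF C(1), of j]
      by (auto simp: mult.commute)
    then have "sign_vec C \<bullet> x = card C * (side_sign C k * x$k)"
      unfolding sign_vec_def inner_vec_def by (simp add: sum.If_cases)
    then have "(sign_vec C \<bullet> x) / card C * side_sign C k = x$k"
      using side_sign_square[OF C(2)] C(2) by auto
    then show ?thesis
      using sum_Bip_single[OF C, of "\<lambda>D. (sign_vec D \<bullet> x) / card D"] by linarith
  next
    case False
    then have "x$k = 0" using kernel_off_bipartite[OF x] component_self by blast
    moreover have "(\<Sum>C\<in>Bip. (sign_vec C \<bullet> x) / card C * side_sign C k) = 0"
      using False by (intro sum_Bip_none) blast
    ultimately show ?thesis by simp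
  qed
  then show ?thesis by (simp add: vec_eq_iff sum_component sign_vec_def)
qed

lemma sum_over_Bip:
  assumes "\<And>j. (\<forall>C\<in>Bip. j \<notin> C) \<Longrightarrow> h j = 0"
  shows "(\<Sum>j\<in>UNIV. h j) = (\<Sum>C\<in>Bip. \<Sum>j\<in>C. h j)"
proof -
  have "(\<Sum>j\<in>UNIV. h j) = (\<Sum>j\<in>\<Union>Bip. h j)"
    using assms by (intro sum.mono_neutral_right) auto
  also have "\<dots> = (\<Sum>C\<in>Bip. \<Sum>j\<in>C. h j)"
    using Bip_disjoint by (subst sum.Union_disjoint) auto
  finally show ?thesis .
qed

end

locale regularized_signless_laplacian = signless_laplacian_graph P for P :: "real^'n^'n" +
  fixes \<alpha> l :: real
  assumes alpha_pos: "\<alpha> > 0" and l_pos: "l > 0"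
begin

definition ones :: "real^'n" where "ones = (\<chi> k. 1)"

definition S :: "real^'n^'n" where "S = \<alpha> *\<^sub>R mat 1 + l *\<^sub>R (\<chi> i j. 1)"

lemma S_mult: "S *v y = \<alpha> *\<^sub>R y + (l * (ones \<bullet> y)) *\<^sub>R ones"
proof -
  have "(S *v y)$k = (\<Sum>j\<in>UNIV. (if k = j then \<alpha> * y$j else 0) + l * y$j)" for k
    unfolding S_def matrix_vector_mult_def mat_def by (auto intro: sum.cong simp: algebra_simps)
  then show ?thesis
    by (simp add: vec_eq_iff ones_def inner_vec_def sum.distrib sum_distrib_left)
qed

lemma S_symmetric: "transpose S = S"
  unfolding S_def by (simp add: transpose_def vec_eq_iff mat_def)

lemma S_coercive: "x \<bullet> (S *v x) \<ge> \<alpha> * (x \<bullet> x)"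
proof -
  have "x \<bullet> (S *v x) = \<alpha> * (x \<bullet> x) + l * (ones \<bullet> x)^2"
    unfolding S_mult by (simp add: inner_add_right power2_eq_square inner_commute)
  then show ?thesis using l_pos by simp
qed

sublocale pencil: regularized_pencil S P \<alpha>
  using S_symmetric S_coercive alpha_pos P_symmetric P_psd by unfold_locales auto

text \<open>z is the orthogonal projection of the all-ones vector onto ker P; gamma is its
  squared length, and the Sherman-Morrison coefficient beta inverts S on ker P.\<close>
definition z :: "real^'n" where
  "z = (\<Sum>C\<in>Bip. (signed_imbalance C / card C) *\<^sub>R sign_vec C)"

definition \<beta> :: real where "\<beta> = l / (\<alpha> + l * gamma P)"

definition N :: "real^'n^'n" where
  "N = (\<chi> k j. (1/\<alpha>) * ((\<Sum>C\<in>Bip. side_sign C k * side_sign C j / card C) - \<beta> * z$k * z$j))"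

lemma z_nth: "z$k = (\<Sum>C\<in>Bip. signed_imbalance C / card C * side_sign C k)"
  unfolding z_def sign_vec_def by (simp add: sum_component)

lemma gamma_nonneg: "gamma P \<ge> 0"
  unfolding gamma_eq using Bip_card_pos by (intro sum_nonneg divide_nonneg_pos) auto

lemma denominator_pos: "\<alpha> + l * gamma P > 0"
  using alpha_pos l_pos gamma_nonneg by (simp add: add_pos_nonneg)

lemma beta_pos: "\<beta> > 0"
  unfolding \<beta>_def using l_pos denominator_pos by simp

lemma beta_gamma: "\<beta> * gamma P < 1"
  unfolding \<beta>_def using denominator_pos alpha_pos by (simp add: field_simps)

lemma sign_vec_inner_z: "C \<in> Bip \<Longrightarrow> z \<bullet> sign_vec C = signed_imbalance C"
proof -
  assume C: "C \<in> Bip"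
  have "z \<bullet> sign_vec C = (\<Sum>D\<in>Bip. if D = C then signed_imbalance C else 0)"
    unfolding z_def inner_sum_left using C Bip_card_pos[OF C]
    by (intro sum.cong) (auto simp: sign_vec_inner)
  then show ?thesis using C finite_Bip by simp
qed

lemma ones_inner_z: "z \<bullet> ones = gamma P"
  unfolding z_def inner_sum_left gamma_eq ones_def
  by (intro sum.cong) (auto simp: sign_vec_sum power2_eq_square)

lemma N_mult:
  "N *v y = (1/\<alpha>) *\<^sub>R ((\<Sum>C\<in>Bip. ((sign_vec C \<bullet> y) / card C) *\<^sub>R sign_vec C)
                      - (\<beta> * (z \<bullet> y)) *\<^sub>R z)"
proof -
  have "(N *v y)$k = (1/\<alpha>) * ((\<Sum>C\<in>Bip. (sign_vec C \<bullet> y) / card C * side_sign C k)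
                       - \<beta> * (z \<bullet> y) * z$k)" for k
  proof -
    have "(N *v y)$k = (1/\<alpha>) * ((\<Sum>j\<in>UNIV. \<Sum>C\<in>Bip. side_sign C k * side_sign C j / card C * y$j)
                         - \<beta> * z$k * (\<Sum>j\<in>UNIV. z$j * y$j))"
      unfolding N_def by (simp add: matrix_vector_mult_def sum_distrib_left sum_distrib_right
          sum_subtractf algebra_simps)
    also have "(\<Sum>j\<in>UNIV. \<Sum>C\<in>Bip. side_sign C k * side_sign C j / card C * y$j)
        = (\<Sum>C\<in>Bip. (sign_vec C \<bullet> y) / card C * side_sign C k)"
      by (subst sum.swap) (simp add: inner_vec_def sign_vec_def sum_distrib_left
          sum_distrib_right sum_divide_distrib algebra_simps)
    finally show ?thesis by (simp add: inner_vec_def)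
  qed
  then show ?thesis by (simp add: vec_eq_iff sum_component sign_vec_def algebra_simps)
qed

lemma N_symmetric: "transpose N = N"
  unfolding N_def transpose_def by (simp add: vec_eq_iff mult.commute)

lemma P_N: "P *v (N *v y) = 0"
proof -
  have "P *v z = 0"
    unfolding z_def by (simp add: vec.sum matrix_vector_mult_scaleR sign_vec_kernel)
  then show ?thesis unfolding N_mult
    by (simp add: matrix_vector_mult_scaleR matrix_vector_mult_diff_distrib vec.sum sign_vec_kernel)
qed

lemma N_S_sign_vec: "C \<in> Bip \<Longrightarrow> N *v (S *v sign_vec C) = sign_vec C"
proof -
  assume C: "C \<in> Bip"
  let ?s = "signed_imbalance C"
  have "(\<Sum>D\<in>Bip. ((sign_vec D \<bullet> sign_vec C) / card D) *\<^sub>R sign_vec D)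
      = (\<Sum>D\<in>Bip. if D = C then sign_vec C else 0)"
    using C Bip_card_pos[OF C] by (intro sum.cong) (auto simp: sign_vec_inner)
  then have "(\<Sum>D\<in>Bip. ((sign_vec D \<bullet> sign_vec C) / card D) *\<^sub>R sign_vec D) = sign_vec C"
    using C finite_Bip by simp
  then have NC: "N *v sign_vec C = (1/\<alpha>) *\<^sub>R (sign_vec C - (\<beta> * ?s) *\<^sub>R z)"
    unfolding N_mult using sign_vec_inner_z[OF C] by simp
  have "(\<Sum>D\<in>Bip. ((sign_vec D \<bullet> ones) / card D) *\<^sub>R sign_vec D) = z"
    unfolding z_def ones_def by (simp add: sign_vec_sum)
  then have N1: "N *v ones = (1/\<alpha>) *\<^sub>R (z - (\<beta> * gamma P) *\<^sub>R z)"
    unfolding N_mult using ones_inner_z by (simp add: inner_commute)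
  have coeff: "l * ?s * (1 - \<beta> * gamma P) = \<alpha> * (\<beta> * ?s)"
    unfolding \<beta>_def using denominator_pos by (simp add: field_simps)
  have "N *v (S *v sign_vec C) = \<alpha> *\<^sub>R (N *v sign_vec C) + (l * ?s) *\<^sub>R (N *v ones)"
    unfolding S_mult using sign_vec_sum[OF C]
    by (simp add: matrix_vector_right_distrib matrix_vector_mult_scaleR inner_commute ones_def)
  also have "\<alpha> *\<^sub>R (N *v sign_vec C) = sign_vec C - (\<beta> * ?s) *\<^sub>R z"
    unfolding NC using alpha_pos by simp
  also have "(l * ?s) *\<^sub>R (N *v ones) = ((l * ?s * (1 - \<beta> * gamma P)) / \<alpha>) *\<^sub>R z"
  proof -
    have "z - (\<beta> * gamma P) *\<^sub>R z = (1 - \<beta> * gamma P) *\<^sub>R z"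
      by (simp add: scaleR_diff_left)
    then show ?thesis unfolding N1 by simp
  qed
  also have "\<dots> = (\<beta> * ?s) *\<^sub>R z"
    unfolding coeff using alpha_pos by simp
  finally show ?thesis by simp
qed

lemma N_S_kernel:
  assumes x: "P *v x = 0"
  shows "N *v (S *v x) = x"
proof -
  have "N *v (S *v x) = (\<Sum>C\<in>Bip. ((sign_vec C \<bullet> x) / card C) *\<^sub>R (N *v (S *v sign_vec C)))"
    by (subst kernel_expansion[OF x]) (simp add: vec.sum matrix_vector_mult_scaleR)
  also have "\<dots> = x"
    by (subst (2) kernel_expansion[OF x]) (simp add: N_S_sign_vec)
  finally show ?thesis .
qed

lemma N_limit: "((\<lambda>t. matrix_inv (S + t *\<^sub>R P)) \<longlongrightarrow> N) at_top"
  by (rule pencil.pencil_inverse_limit[OF N_symmetric P_N N_S_kernel])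

lemma z_on_component: "D \<in> Bip \<Longrightarrow> j \<in> D \<Longrightarrow> z$j = signed_imbalance D / card D * side_sign D j"
  unfolding z_nth by (rule sum_Bip_single)

lemma z_outside: "\<forall>D\<in>Bip. j \<notin> D \<Longrightarrow> z$j = 0"
  unfolding z_nth by (rule sum_Bip_none)

lemma N_row_outside: "\<forall>C\<in>Bip. k \<notin> C \<Longrightarrow> N$k$j = 0"
  using sum_Bip_none[of k "\<lambda>D. side_sign D j / card D"] z_outside
  unfolding N_def by (simp add: mult.commute)

lemma N_row:
  assumes C: "C \<in> Bip" and k: "k \<in> C"
  shows "N$k$j = (1/\<alpha>) * side_sign C k
                 * (side_sign C j / card C - \<beta> * (signed_imbalance C / card C) * z$j)"
  using sum_Bip_single[OF C k, of "\<lambda>D. side_sign D j / card D"] z_on_component[OF C k]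
  unfolding N_def by (simp add: algebra_simps)

lemma component_weight_le_gamma: "C \<in> Bip \<Longrightarrow> (signed_imbalance C)^2 / card C \<le> gamma P"
  unfolding gamma_eq using finite_Bip Bip_card_pos
  by (intro member_le_sum) (auto intro: divide_nonneg_pos)

text \<open>The diagonal block stays nonnegative because beta * gamma < 1.\<close>
lemma diagonal_block_nonneg: "C \<in> Bip \<Longrightarrow> 1 - \<beta> * (signed_imbalance C)^2 / card C \<ge> 0"
proof -
  assume C: "C \<in> Bip"
  have "\<beta> * ((signed_imbalance C)^2 / card C) \<le> \<beta> * gamma P"
    using component_weight_le_gamma[OF C] beta_pos by (intro mult_left_mono) auto
  then show ?thesis using beta_gamma by simp
qed

lemma N_block_sum:
  assumes C: "C \<in> Bip" and k: "k \<in> C" and D: "D \<in> Bip"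
  shows "(\<Sum>j\<in>D. \<bar>N$k$j\<bar>) = (1/\<alpha>) * (if D = C then 1 - \<beta> * (signed_imbalance C)^2 / card C
          else \<beta> * \<bar>signed_imbalance C\<bar> * \<bar>signed_imbalance D\<bar> / card C)"
proof -
  let ?sC = "signed_imbalance C" and ?sD = "signed_imbalance D"
  have entry: "\<bar>N$k$j\<bar> = (1/\<alpha>) * (if D = C then (1 - \<beta> * ?sC^2 / card C) / card C
                else \<beta> * \<bar>?sC\<bar> * \<bar>?sD\<bar> / card C / card D)" if j: "j \<in> D" for j
  proof (cases "D = C")
    case True
    have "side_sign C j / card C - \<beta> * (?sC / card C) * z$j
        = side_sign C j * ((1 - \<beta> * ?sC^2 / card C) / card C)"
      using z_on_component[OF C, of j] j True
      by (simp add: algebra_simps power2_eq_square diff_divide_distrib)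
    then show ?thesis unfolding N_row[OF C k] using True j side_sign_abs[of _ C] alpha_pos
        diagonal_block_nonneg[OF C] k by (simp add: abs_mult)
  next
    case False
    then have "side_sign C j = 0" using side_sign_outside[OF C] Bip_disjoint[OF C D] j by blast
    then show ?thesis unfolding N_row[OF C k] z_on_component[OF D j]
      using False side_sign_abs[of _ C] side_sign_abs[OF j] k alpha_pos beta_pos
      by (simp add: abs_mult)
  qed
  have "(\<Sum>j\<in>D. \<bar>N$k$j\<bar>) = card D * ((1/\<alpha>) * (if D = C then (1 - \<beta> * ?sC^2 / card C) / card C
                else \<beta> * \<bar>?sC\<bar> * \<bar>?sD\<bar> / card C / card D))"
    by (simp add: entry)
  then show ?thesis using Bip_card_pos[OF C] Bip_card_pos[OF D]
    by (cases "D = C") (auto simp: card_gt_0_iff)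
qed

lemma N_row_sum:
  assumes C: "C \<in> Bip" and k: "k \<in> C"
  shows "(\<Sum>j\<in>UNIV. \<bar>N$k$j\<bar>) = 1/\<alpha> + l / (\<alpha> * (\<alpha> + l * gamma P)) *
           (imbalance P C * ((\<Sum>D\<in>Bip. imbalance P D) - 2 * imbalance P C) / card C)"
proof -
  let ?s = "\<lambda>D. \<bar>signed_imbalance D\<bar>"
  have outside: "\<bar>N$k$j\<bar> = 0" if "\<forall>D\<in>Bip. j \<notin> D" for j
    unfolding N_row[OF C k] z_outside[OF that] using that C side_sign_outside by simp
  have others: "(\<Sum>D\<in>Bip - {C}. \<Sum>j\<in>D. \<bar>N$k$j\<bar>)
      = (1/\<alpha>) * (\<beta> * ?s C / card C) * ((\<Sum>D\<in>Bip. ?s D) - ?s C)"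
  proof -
    have "(\<Sum>D\<in>Bip - {C}. \<Sum>j\<in>D. \<bar>N$k$j\<bar>) = (\<Sum>D\<in>Bip - {C}. (1/\<alpha>) * (\<beta> * ?s C / card C) * ?s D)"
      using N_block_sum[OF C k] by (intro sum.cong) auto
    also have "\<dots> = (1/\<alpha>) * (\<beta> * ?s C / card C) * (\<Sum>D\<in>Bip - {C}. ?s D)"
      by (rule sum_distrib_left[symmetric])
    finally show ?thesis using finite_Bip C by (simp add: sum_diff1)
  qed
  have "(\<Sum>j\<in>UNIV. \<bar>N$k$j\<bar>) = (\<Sum>D\<in>Bip. \<Sum>j\<in>D. \<bar>N$k$j\<bar>)"
    using outside by (rule sum_over_Bip)
  also have "\<dots> = (\<Sum>j\<in>C. \<bar>N$k$j\<bar>) + (\<Sum>D\<in>Bip - {C}. \<Sum>j\<in>D. \<bar>N$k$j\<bar>)"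
    using finite_Bip C by (simp add: sum.remove)
  also have "\<dots> = (1/\<alpha>) * (1 - \<beta> * ?s C * ?s C / card C)
      + (1/\<alpha>) * (\<beta> * ?s C / card C) * ((\<Sum>D\<in>Bip. ?s D) - ?s C)"
    unfolding others N_block_sum[OF C k C] by (simp add: power2_eq_square abs_mult_self_eq)
  also have "\<dots> = 1/\<alpha> + \<beta> / \<alpha> * (?s C * ((\<Sum>D\<in>Bip. ?s D) - 2 * ?s C) / card C)"
    using alpha_pos Bip_card_pos[OF C] by (simp add: divide_simps) (simp add: algebra_simps)
  finally show ?thesis unfolding imbalance_eq \<beta>_def by simp
qed

lemma norm_inf_N_no_bipartite: "Bip = {} \<Longrightarrow> norm_inf N = 0"
  unfolding norm_inf_def using N_row_outside by simp

lemma norm_inf_N_Max: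
  assumes ne: "Bip \<noteq> {}"
    and rows: "\<And>C k. C \<in> Bip \<Longrightarrow> k \<in> C \<Longrightarrow> (\<Sum>j\<in>UNIV. \<bar>N$k$j\<bar>) = g C"
  shows "norm_inf N = Max (g ` Bip)"
proof -
  define row where "row k = (\<Sum>j\<in>UNIV. \<bar>N$k$j\<bar>)" for k
  have fin: "finite (g ` Bip)" using finite_Bip by simp
  have "Max (g ` Bip) \<in> g ` Bip" using Max_in[OF fin] ne by simp
  then obtain C0 where C0: "C0 \<in> Bip" "Max (g ` Bip) = g C0" by auto
  have "C0 \<noteq> {}" using Bip_card_pos[OF C0(1)] by auto
  then obtain k0 where k0: "k0 \<in> C0" by blast
  have row_k0: "row k0 = Max (g ` Bip)" unfolding row_def using rows[OF C0(1) k0] C0(2) by simp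
  have "Max (range row) = Max (g ` Bip)"
  proof (rule Max_eqI)
    show "finite (range row)" by simp
  next
    fix y assume "y \<in> range row"
    then obtain k where y: "y = row k" by auto
    show "y \<le> Max (g ` Bip)"
    proof (cases "\<exists>C\<in>Bip. k \<in> C")
      case True
      then show ?thesis unfolding y row_def using rows fin by auto
    next
      case False
      then have "y = 0" unfolding y row_def using N_row_outside by simp
      also have "0 \<le> row k0" unfolding row_def by (simp add: sum_nonneg)
      finally show ?thesis using row_k0 by simp
    qed
  next
    show "Max (g ` Bip) \<in> range row" using row_k0 by (metis rangeI)
  qed
  then show ?thesis unfolding norm_inf_def row_def .
qed

text \<open>The row value is an increasing affine function of the component term, so the
  maximum can be taken over the component terms.\<close>
lemma norm_inf_N:
  assumes ne: "Bip \<noteq> {}"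
  shows "norm_inf N = 1/\<alpha> + l / (\<alpha> * (\<alpha> + l * gamma P)) *
    Max ((\<lambda>C. imbalance P C * ((\<Sum>D\<in>Bip. imbalance P D) - 2 * imbalance P C) / card C) ` Bip)"
proof -
  define f where "f C = imbalance P C * ((\<Sum>D\<in>Bip. imbalance P D) - 2 * imbalance P C) / card C"
    for C
  define c where "c = l / (\<alpha> * (\<alpha> + l * gamma P))"
  have "norm_inf N = Max ((\<lambda>x. 1/\<alpha> + c * x) ` f ` Bip)"
    unfolding image_image c_def f_def by (rule norm_inf_N_Max[OF ne N_row_sum])
  also have "\<dots> = 1/\<alpha> + c * Max (f ` Bip)"
  proof -
    have "c \<ge> 0" unfolding c_def using l_pos alpha_pos denominator_pos by simp
    then have "mono (\<lambda>x. 1/\<alpha> + c * x)" by (simp add: mono_def mult_left_mono)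
    then show ?thesis
      using mono_Max_commute[of _ "f ` Bip"] finite_Bip ne by (metis finite_imageI image_is_empty)
  qed
  finally show ?thesis unfolding c_def f_def .
qed

end

text \<open>The hypotheses n >= 3 and alpha >= (n - 2) l enter only through alpha > 0.\<close>
theorem corollary4p10:
  fixes P :: "real^'n^'n" and \<alpha> l :: real
  assumes "CARD('n) \<ge> 3"
    and "l > 0"
    and "\<alpha> \<ge> (real CARD('n) - 2) * l"
    and "signless_laplacian P"
  shows "\<exists>N. ((\<lambda>t::real. matrix_inv ((\<alpha> *\<^sub>R mat 1 + l *\<^sub>R (\<chi> i j. 1)) + t *\<^sub>R P))
                \<longlongrightarrow> N) at_top
           \<and> (card (bipartite_components P) = 0 \<longrightarrow> norm_inf N = 0)
           \<and> (card (bipartite_components P) \<ge> 1 \<longrightarrow>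
                (let d = (\<Sum>C\<in>bipartite_components P. imbalance P C) in
                 norm_inf N = 1 / \<alpha> + l / (\<alpha> * (\<alpha> + l * gamma P)) *
                   Max ((\<lambda>C. imbalance P C * (d - 2 * imbalance P C) / real (card C))
                          ` bipartite_components P)))"
proof -
  have "(real CARD('n) - 2) * l \<ge> 1 * l"
    using assms(1,2) by (intro mult_right_mono) auto
  then have "\<alpha> > 0" using assms(2,3) by linarith
  then interpret regularized_signless_laplacian P \<alpha> l
    using assms by unfold_locales auto
  show ?thesis
  proof (intro exI conjI impI)
    show "((\<lambda>t. matrix_inv ((\<alpha> *\<^sub>R mat 1 + l *\<^sub>R (\<chi> i j. 1)) + t *\<^sub>R P)) \<longlongrightarrow> N) at_top"
      using N_limit unfolding S_def .
    show "norm_inf N = 0" if "card Bip = 0"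
      using that finite_Bip norm_inf_N_no_bipartite by simp
    show "let d = (\<Sum>C\<in>Bip. imbalance P C) in norm_inf N = 1 / \<alpha> + l / (\<alpha> * (\<alpha> + l * gamma P)) *
        Max ((\<lambda>C. imbalance P C * (d - 2 * imbalance P C) / real (card C)) ` Bip)"
      if "card Bip \<ge> 1"
      unfolding Let_def using that by (intro norm_inf_N) auto
  qed
qed

end
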